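(* Let $0<m<L$, $\alpha>0$, and set $\kappa = L/m$. Suppose that $\delta \in \left[0, \tfrac{2}{\kappa+1}\right)$ and $\rho \geq \rho_\mathrm{GD}(\delta) := \max\big(1-(1-\delta)\alpha m,\ (1+\delta)\alpha L -1\big)$. If \[ \alpha \leq \frac{1}{1-\delta}\left( \frac{2}{L+m} - \frac{\delta}{m} \right) \quad\text{or}\quad \alpha \geq \frac{1}{1+\delta}\left( \frac{2}{L+m} + \frac{\delta}{L} \right), \] then there exists $c>0$ such that for every $f \in \mathcal{S}(m,L)$ (with reference point $x_\star$), every sequence $x(k)\in\mathbb{R}^n$ and every error sequence $e(k)\in\mathbb{R}^n$ satisfying, for all $k\ge 0$, \[ x(k+1) = x(k) - \alpha\big(\nabla f(x(k)) + e(k)\big), \qquad |e(k)| \leq \delta\, |\nabla f(x(k))|, \] we have $|x(k)-x_\star| \leq c\, \rho^k\, |x(0)-x_\star|$ for all $k \geq 0$.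
   Context: For $0\le m<L$, $\mathcal{S}(m,L)$ denotes the set of $C^1$ functions $f:\mathbb{R}^n\to\mathbb{R}$ for which there is a reference point $x_\star\in\mathbb{R}^n$ such that for every $x\in\mathbb{R}^n$, $\langle m(x-x_\star) - \nabla f(x),\ L(x-x_\star) - \nabla f(x)\rangle \le 0$ (gradients bounded in the sector $[m,L]$ about $x_\star$). The constant $c$ may depend on $m,L,\alpha,\delta,\rho$ but not on $f$, $x$ or $e$. *)

theory Defs
  imports "HOL-Analysis.Analysis"
begin

definition is_C1_gradient :: "('a::euclidean_space \<Rightarrow> real) \<Rightarrow> ('a \<Rightarrow> 'a) \<Rightarrow> bool" where
  "is_C1_gradient f g \<longleftrightarrow>
     (\<forall>x. (f has_derivative (\<lambda>h. g x \<bullet> h)) (at x)) \<and> continuous_on UNIV g"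

definition sector_class :: "real \<Rightarrow> real \<Rightarrow> ('a::euclidean_space \<Rightarrow> real) \<Rightarrow> ('a \<Rightarrow> 'a) \<Rightarrow> 'a \<Rightarrow> bool" where
  "sector_class m L f g xs \<longleftrightarrow> is_C1_gradient f g \<and>
     (\<forall>x. (m *\<^sub>R (x - xs) - g x) \<bullet> (L *\<^sub>R (x - xs) - g x) \<le> 0)"

definition rho_GD :: "real \<Rightarrow> real \<Rightarrow> real \<Rightarrow> real \<Rightarrow> real" where
  "rho_GD m L \<alpha> \<delta> = max (1 - (1 - \<delta>) * \<alpha> * m) ((1 + \<delta>) * \<alpha> * L - 1)"

end

theory Submission
  imports Defs
begin

(* Write y = x - xs and u = g x. The sector condition gives m |y| <= |u| <= L |y| and
   |y - \<alpha> u|^2 <= A |y|^2 + B |u|^2, where A + B q^2 is the quadratic in q that agrees with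
   (1 - \<alpha> q)^2 at q = m and q = L. With the error term, one step therefore contracts |y| by at
   most sqrt (A + B q^2) + \<alpha> \<delta> q for some q in [m, L]. If A, B >= 0 this function of q is
   convex, so it is largest at an endpoint. Otherwise AB <= 0 and sqrt (A + B q^2) lies below its
   tangents; the two step-size conditions, with denominators cleared, say exactly that the
   tangent bound at q = m (small \<alpha>) resp. q = L (large \<alpha>) is again largest at that endpoint.
   At the endpoints the bound is |1 - \<alpha> q| + \<alpha> \<delta> q, and the larger of the two values is
   rho_GD. So every step contracts by rho_GD <= \<rho>, and c = 1 works. *)

lemma convex_on_sqrt_quadratic:
  fixes A B :: real
  assumes "0 \<le> A" "0 \<le> B"
  shows "convex_on UNIV (\<lambda>x. sqrt (A + B * x\<^sup>2))"
proof (rule convex_onI)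
  fix x y u :: real
  assume u: "0 < u" "u < 1"
  define p where "p x = (sqrt A, sqrt B * x)" for x
  have norm_p: "norm (p x) = sqrt (A + B * x\<^sup>2)" for x
    using assms by (simp add: p_def norm_Pair power_mult_distrib)
  have "p ((1 - u) * x + u * y) = (1 - u) *\<^sub>R p x + u *\<^sub>R p y"
    by (simp add: p_def algebra_simps)
  then have "norm (p ((1 - u) * x + u * y)) \<le> (1 - u) * norm (p x) + u * norm (p y)"
    using u by (metis abs_of_nonneg less_eq_real_def diff_ge_0_iff_ge norm_scaleR norm_triangle_ineq)
  then show "sqrt (A + B * ((1 - u) *\<^sub>R x + u *\<^sub>R y)\<^sup>2) \<le> (1 - u) * sqrt (A + B * x\<^sup>2) + u * sqrt (A + B * y\<^sup>2)"
    by (simp add: norm_p)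
qed simp

lemma sqrt_quadratic_plus_linear_le_max_endpoints:
  fixes A B c a b q s :: real
  assumes "0 \<le> A" "0 \<le> B" "0 \<le> c" "a \<le> q" "q \<le> b" "0 \<le> s" "s\<^sup>2 \<le> A + B * q\<^sup>2"
  shows "s + c * q \<le> max (sqrt (A + B * a\<^sup>2) + c * a) (sqrt (A + B * b\<^sup>2) + c * b)"
proof -
  let ?gain = "\<lambda>x. sqrt (A + B * x\<^sup>2) + c * x"
  have "convex_on UNIV (\<lambda>x. sqrt (A + B * x\<^sup>2))"
    using assms(1,2) by (rule convex_on_sqrt_quadratic)
  moreover have "convex_on UNIV (\<lambda>x. c * x)"
    using assms(3) by (intro convex_on_cmul) (simp_all add: convex_on_ident)
  ultimately have "convex_on {a..b} ?gain"
    by (intro convex_on_subset[OF convex_on_add]) auto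
  then have "?gain q \<le> max (?gain a) (?gain b)"
    using assms(4,5) by (intro convex_on_le_max[where f = ?gain]) auto
  moreover have "s \<le> sqrt (A + B * q\<^sup>2)"
    using assms(7) by (rule real_le_rsqrt)
  ultimately show ?thesis
    by simp
qed

lemma sqrt_quadratic_le_tangent:
  fixes A B q t s :: real
  assumes "A * B \<le> 0" "0 \<le> q" "0 \<le> t" "0 \<le> s" "s\<^sup>2 \<le> A + B * q\<^sup>2" "0 < r" "r\<^sup>2 = A + B * t\<^sup>2"
  shows "s \<le> r + B * t / r * (q - t)"
proof -
  have "q * q \<le> t * q \<and> t * q \<le> t * t \<or> t * t \<le> t * q \<and> t * q \<le> q * q"
    using assms(2,3) by (cases "q \<le> t") (auto intro: mult_right_mono mult_left_mono)
  then have "B * (q * q) \<le> B * (t * q) \<or> B * (t * t) \<le> B * (t * q)"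
    by (cases "0 \<le> B") (auto intro: mult_left_mono mult_left_mono_neg)
  then have tangent_nonneg: "0 \<le> A + B * t * q"
    using assms(4,5,7) by (smt (verit) mult.assoc power2_eq_square zero_le_power2)
  have "(s * r)\<^sup>2 \<le> (A + B * q\<^sup>2) * (A + B * t\<^sup>2)"
    unfolding power_mult_distrib assms(7)[symmetric] using assms(5) by (simp add: mult_right_mono)
  also have "\<dots> = (A + B * t * q)\<^sup>2 + A * B * (q - t)\<^sup>2"
    by (simp add: algebra_simps power2_eq_square)
  also have "\<dots> \<le> (A + B * t * q)\<^sup>2"
    using assms(1) by (simp add: mult_nonpos_nonneg)
  finally have "s * r \<le> A + B * t * q"
    using tangent_nonneg power2_le_imp_le by blast
  also have "\<dots> = (r + B * t / r * (q - t)) * r"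
    using assms(6,7) by (simp add: field_simps power2_eq_square)
  finally show ?thesis
    using assms(6) by simp
qed

lemma sqrt_quadratic_plus_linear_le_at_tangent_point:
  fixes A B q t s c :: real
  assumes "A * B \<le> 0" "0 \<le> q" "0 \<le> t" "0 \<le> s" "s\<^sup>2 \<le> A + B * q\<^sup>2" "0 < r" "r\<^sup>2 = A + B * t\<^sup>2"
    and slope: "(q - t) * (B * t + c * r) \<le> 0"
  shows "s + c * q \<le> r + c * t"
proof -
  have "s + c * q \<le> r + B * t / r * (q - t) + c * q"
    using sqrt_quadratic_le_tangent[OF assms(1-7)] by simp
  also have "\<dots> = r + c * t + (q - t) * (B * t + c * r) / r"
    using assms(6) by (simp add: field_simps)
  also have "\<dots> \<le> r + c * t"
    using slope assms(6) by (simp add: divide_nonpos_pos)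
  finally show ?thesis .
qed

lemma mult_nonpos_if_not_both_nonneg:
  fixes A B t :: real
  assumes "\<not> (0 \<le> A \<and> 0 \<le> B)" "0 \<le> A + B * t\<^sup>2" "t \<noteq> 0"
  shows "A * B \<le> 0"
proof (cases "A < 0")
  case True
  then have "0 < B * t\<^sup>2"
    using assms(2) by linarith
  then have "0 < B"
    using assms(3) by (simp add: zero_less_mult_iff)
  with True show ?thesis
    by (simp add: mult_nonpos_nonneg)
qed (use assms(1) in \<open>simp add: mult_nonneg_nonpos\<close>)

lemma rho_GD_eq_max_endpoint_gains:
  assumes "0 \<le> \<alpha>" "0 \<le> \<delta>" "\<delta> \<le> 1" "m \<le> L"
  shows "rho_GD m L \<alpha> \<delta> = max (\<bar>1 - \<alpha> * m\<bar> + \<alpha> * \<delta> * m) (\<bar>1 - \<alpha> * L\<bar> + \<alpha> * \<delta> * L)"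
proof -
  have "\<alpha> * m \<le> \<alpha> * L" "\<alpha> * \<delta> * m \<le> \<alpha> * \<delta> * L"
    using assms by (auto intro: mult_left_mono)
  moreover have "\<alpha> * (L - m) * \<delta> \<le> \<alpha> * (L - m) * 1"
    using assms by (intro mult_left_mono) auto
  ultimately show ?thesis
    unfolding rho_GD_def by (auto simp: abs_if max_def algebra_simps)
qed

lemma small_step_tangent_slope:
  fixes m L \<alpha> \<delta> :: real
  assumes "0 < m" "m < L" "0 < \<alpha>" "\<delta> < 1"
    and "\<alpha> \<le> 1 / (1 - \<delta>) * (2 / (L + m) - \<delta> / m)"
  shows "\<alpha> * m < 1" "\<alpha> * (\<alpha> - 2 / (m + L)) * m + \<alpha> * \<delta> * (1 - \<alpha> * m) \<le> 0"
proof -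
  have "\<alpha> * (1 - \<delta>) \<le> 2 / (L + m) - \<delta> / m"
    using assms(4,5) by (simp add: field_simps)
  then have "\<alpha> * (1 - \<delta>) * (m * (L + m)) \<le> (2 / (L + m) - \<delta> / m) * (m * (L + m))"
    using assms(1,2) by (intro mult_right_mono) auto
  also have "\<dots> = 2 * m - \<delta> * (L + m)"
    using assms(1,2) by (simp add: left_diff_distrib)
  finally have cleared: "\<alpha> * (1 - \<delta>) * m * (L + m) \<le> 2 * m - \<delta> * (L + m)"
    by (simp add: mult.assoc)
  have "(\<alpha> * m) * ((1 - \<delta>) * (L + m)) < 1 * ((1 - \<delta>) * (L + m))"
    using cleared assms(2) by (simp add: algebra_simps)
  then show "\<alpha> * m < 1"
    using assms by (simp add: mult_less_cancel_right)
  have "(\<alpha> * (\<alpha> - 2 / (m + L)) * m + \<alpha> * \<delta> * (1 - \<alpha> * m)) * (L + m)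
      = \<alpha> * (\<alpha> * (1 - \<delta>) * m * (L + m) - (2 * m - \<delta> * (L + m)))"
    using assms by (simp add: field_simps)
  also have "\<dots> \<le> 0"
    using cleared assms(3) by (simp add: mult_nonneg_nonpos)
  finally show "\<alpha> * (\<alpha> - 2 / (m + L)) * m + \<alpha> * \<delta> * (1 - \<alpha> * m) \<le> 0"
    using assms by (simp add: mult_le_0_iff)
qed

lemma large_step_tangent_slope:
  fixes m L \<alpha> \<delta> :: real
  assumes "0 < m" "m < L" "0 < \<alpha>" "0 \<le> \<delta>"
    and "\<alpha> \<ge> 1 / (1 + \<delta>) * (2 / (L + m) + \<delta> / L)"
  shows "1 < \<alpha> * L" "0 \<le> \<alpha> * (\<alpha> - 2 / (m + L)) * L + \<alpha> * \<delta> * (\<alpha> * L - 1)"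
proof -
  have "2 / (L + m) + \<delta> / L \<le> \<alpha> * (1 + \<delta>)"
    using assms(4,5) by (simp add: field_simps)
  then have "(2 / (L + m) + \<delta> / L) * (L * (L + m)) \<le> \<alpha> * (1 + \<delta>) * (L * (L + m))"
    using assms(1,2) by (intro mult_right_mono) auto
  moreover have "(2 / (L + m) + \<delta> / L) * (L * (L + m)) = 2 * L + \<delta> * (L + m)"
    using assms(1,2) by (simp add: distrib_right)
  ultimately have cleared: "2 * L + \<delta> * (L + m) \<le> \<alpha> * (1 + \<delta>) * L * (L + m)"
    by (simp add: mult.assoc)
  have "1 * ((1 + \<delta>) * (L + m)) < (\<alpha> * L) * ((1 + \<delta>) * (L + m))"
    using cleared assms(2) by (simp add: algebra_simps)
  then show "1 < \<alpha> * L"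
    using assms by (simp add: mult_less_cancel_right)
  have "(\<alpha> * (\<alpha> - 2 / (m + L)) * L + \<alpha> * \<delta> * (\<alpha> * L - 1)) * (L + m)
      = \<alpha> * (\<alpha> * (1 + \<delta>) * L * (L + m) - (2 * L + \<delta> * (L + m)))"
    using assms by (simp add: field_simps)
  also have "0 \<le> \<dots>"
    using cleared assms(3) by simp
  finally show "0 \<le> \<alpha> * (\<alpha> - 2 / (m + L)) * L + \<alpha> * \<delta> * (\<alpha> * L - 1)"
    using assms by (simp add: zero_le_mult_iff)
qed

lemma perturbed_gain_le_rho_GD:
  fixes m L \<alpha> \<delta> q s :: real
  assumes "0 < m" "m < L" "0 < \<alpha>" "0 \<le> \<delta>" "\<delta> < 1"
    and step_size: "\<alpha> \<le> 1 / (1 - \<delta>) * (2 / (L + m) - \<delta> / m)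
      \<or> \<alpha> \<ge> 1 / (1 + \<delta>) * (2 / (L + m) + \<delta> / L)"
    and q_range: "m \<le> q" "q \<le> L" and "0 \<le> s"
    and s: "s\<^sup>2 \<le> 1 - 2 * \<alpha> * m * L / (m + L) + \<alpha> * (\<alpha> - 2 / (m + L)) * q\<^sup>2"
  shows "s + \<alpha> * \<delta> * q \<le> rho_GD m L \<alpha> \<delta>"
proof -
  define A where "A = 1 - 2 * \<alpha> * m * L / (m + L)"
  define B where "B = \<alpha> * (\<alpha> - 2 / (m + L))"
  have interpolation: "A + B * t\<^sup>2 = (1 - \<alpha> * t)\<^sup>2 + 2 * \<alpha> * (t - m) * (L - t) / (m + L)" for t
    using assms(1,2) unfolding A_def B_def by (simp add: divide_simps power2_eq_square) algebra
  have at_m: "A + B * m\<^sup>2 = (1 - \<alpha> * m)\<^sup>2" and at_L: "A + B * L\<^sup>2 = (1 - \<alpha> * L)\<^sup>2"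
    by (simp_all add: interpolation)
  have s: "s\<^sup>2 \<le> A + B * q\<^sup>2"
    using s by (simp add: A_def B_def)
  have rho: "rho_GD m L \<alpha> \<delta> = max (\<bar>1 - \<alpha> * m\<bar> + \<alpha> * \<delta> * m) (\<bar>1 - \<alpha> * L\<bar> + \<alpha> * \<delta> * L)"
    using assms(1-5) by (intro rho_GD_eq_max_endpoint_gains) simp_all
  show ?thesis
  proof (cases "0 \<le> A \<and> 0 \<le> B")
    case True
    then have "s + \<alpha> * \<delta> * q \<le> max (sqrt (A + B * m\<^sup>2) + \<alpha> * \<delta> * m) (sqrt (A + B * L\<^sup>2) + \<alpha> * \<delta> * L)"
      using assms(3,4) q_range \<open>0 \<le> s\<close> s by (intro sqrt_quadratic_plus_linear_le_max_endpoints) simp_all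
    then show ?thesis
      unfolding rho at_m at_L real_sqrt_abs .
  next
    case False
    then have AB: "A * B \<le> 0"
      using at_m assms(1) by (intro mult_nonpos_if_not_both_nonneg[of A B m]) simp_all
    have "0 \<le> q" "0 \<le> m" "0 \<le> L"
      using assms(1,2) q_range by simp_all
    from step_size show ?thesis
    proof
      assume "\<alpha> \<le> 1 / (1 - \<delta>) * (2 / (L + m) - \<delta> / m)"
      with assms(1-3,5) have "\<alpha> * m < 1" and "B * m + \<alpha> * \<delta> * (1 - \<alpha> * m) \<le> 0"
        unfolding B_def by (rule small_step_tangent_slope)+
      moreover from this have "(q - m) * (B * m + \<alpha> * \<delta> * (1 - \<alpha> * m)) \<le> 0"
        using q_range by (simp add: mult_nonneg_nonpos)
      ultimately have "s + \<alpha> * \<delta> * q \<le> (1 - \<alpha> * m) + \<alpha> * \<delta> * m"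
        using AB \<open>0 \<le> q\<close> \<open>0 \<le> m\<close> \<open>0 \<le> s\<close> s at_m[symmetric]
        by (intro sqrt_quadratic_plus_linear_le_at_tangent_point) simp_all
      then show ?thesis
        unfolding rho by linarith
    next
      assume "\<alpha> \<ge> 1 / (1 + \<delta>) * (2 / (L + m) + \<delta> / L)"
      with assms(1-4) have "1 < \<alpha> * L" and "0 \<le> B * L + \<alpha> * \<delta> * (\<alpha> * L - 1)"
        unfolding B_def by (rule large_step_tangent_slope)+
      moreover from this have "(q - L) * (B * L + \<alpha> * \<delta> * (\<alpha> * L - 1)) \<le> 0"
        using q_range by (simp add: mult_nonpos_nonneg)
      moreover have "(\<alpha> * L - 1)\<^sup>2 = A + B * L\<^sup>2"
        using at_L by (simp add: power2_commute)
      ultimately have "s + \<alpha> * \<delta> * q \<le> (\<alpha> * L - 1) + \<alpha> * \<delta> * L"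
        using AB \<open>0 \<le> q\<close> \<open>0 \<le> L\<close> \<open>0 \<le> s\<close> s
        by (intro sqrt_quadratic_plus_linear_le_at_tangent_point) simp_all
      then show ?thesis
        unfolding rho by linarith
    qed
  qed
qed

lemma sector_inner_expand:
  fixes y u :: "'a::real_inner"
  shows "(m *\<^sub>R y - u) \<bullet> (L *\<^sub>R y - u) = m * L * (norm y)\<^sup>2 - (m + L) * (u \<bullet> y) + (norm u)\<^sup>2"
  by (simp add: inner_commute power2_norm_eq_inner algebra_simps)

lemma sector_norm_bounds:
  fixes y u :: "'a::real_inner"
  assumes "0 \<le> m" "m \<le> L" and sector: "(m *\<^sub>R y - u) \<bullet> (L *\<^sub>R y - u) \<le> 0"
  shows "m * norm y \<le> norm u" "norm u \<le> L * norm y"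
proof -
  have "(norm u - m * norm y) * (norm u - L * norm y)
      = m * L * (norm y)\<^sup>2 - (m + L) * (norm u * norm y) + (norm u)\<^sup>2"
    by (simp add: algebra_simps power2_eq_square)
  also have "\<dots> \<le> m * L * (norm y)\<^sup>2 - (m + L) * (u \<bullet> y) + (norm u)\<^sup>2"
    using assms(1,2) norm_cauchy_schwarz[of u y] by (simp add: mult_left_mono)
  also have "\<dots> \<le> 0"
    using sector by (simp add: sector_inner_expand)
  finally have "(norm u - m * norm y) * (norm u - L * norm y) \<le> 0" .
  moreover have "m * norm y \<le> L * norm y"
    using assms(2) by (simp add: mult_right_mono)
  ultimately show "m * norm y \<le> norm u" "norm u \<le> L * norm y"
    by (auto simp: mult_le_0_iff)
qed

lemma gradient_step_norm_sq_le:
  fixes y u :: "'a::real_inner"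
  assumes "0 < m + L" "0 \<le> \<alpha>" and sector: "(m *\<^sub>R y - u) \<bullet> (L *\<^sub>R y - u) \<le> 0"
  shows "(norm (y - \<alpha> *\<^sub>R u))\<^sup>2
    \<le> (1 - 2 * \<alpha> * m * L / (m + L)) * (norm y)\<^sup>2 + \<alpha> * (\<alpha> - 2 / (m + L)) * (norm u)\<^sup>2"
proof -
  have "2 * \<alpha> * (m * L * (norm y)\<^sup>2 + (norm u)\<^sup>2) \<le> 2 * \<alpha> * ((m + L) * (u \<bullet> y))"
    using sector assms(2) by (simp add: sector_inner_expand mult_left_mono)
  then have "2 * \<alpha> * (m * L * (norm y)\<^sup>2 + (norm u)\<^sup>2) / (m + L) \<le> 2 * \<alpha> * (u \<bullet> y)"
    using assms(1) by (simp add: divide_simps mult.commute mult.left_commute)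
  moreover have "(norm (y - \<alpha> *\<^sub>R u))\<^sup>2 = (norm y)\<^sup>2 - 2 * \<alpha> * (u \<bullet> y) + \<alpha>\<^sup>2 * (norm u)\<^sup>2"
    unfolding power2_norm_eq_inner
    by (simp add: inner_commute algebra_simps power2_eq_square)
  ultimately show ?thesis
    by (simp add: add_divide_distrib algebra_simps power2_eq_square)
qed

lemma perturbed_gradient_step_contracts:
  fixes m L \<alpha> \<delta> :: real and y u e :: "'a::real_inner"
  assumes "0 < m" "m < L" "0 < \<alpha>" "0 \<le> \<delta>" "\<delta> < 1"
    and step_size: "\<alpha> \<le> 1 / (1 - \<delta>) * (2 / (L + m) - \<delta> / m)
      \<or> \<alpha> \<ge> 1 / (1 + \<delta>) * (2 / (L + m) + \<delta> / L)"
    and sector: "(m *\<^sub>R y - u) \<bullet> (L *\<^sub>R y - u) \<le> 0"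
    and error: "norm e \<le> \<delta> * norm u"
  shows "norm (y - \<alpha> *\<^sub>R (u + e)) \<le> rho_GD m L \<alpha> \<delta> * norm y"
proof -
  have "norm (y - \<alpha> *\<^sub>R (u + e)) \<le> norm (y - \<alpha> *\<^sub>R u) + norm (\<alpha> *\<^sub>R e)"
    by (metis norm_triangle_ineq4 scaleR_right_distrib diff_diff_add)
  also have "\<dots> \<le> norm (y - \<alpha> *\<^sub>R u) + \<alpha> * \<delta> * norm u"
    using error assms(3) by (simp add: mult_left_mono mult.assoc)
  also have "\<dots> \<le> rho_GD m L \<alpha> \<delta> * norm y"
  proof (cases "y = 0")
    case True
    then have "u = 0"
      using sector_norm_bounds(2)[OF _ _ sector] assms(1,2) by simp
    with True show ?thesis
      by simp
  next
    case False
    define n where "n = norm y"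
    have "0 < n"
      using False by (simp add: n_def)
    have "m * n \<le> norm u" "norm u \<le> L * n"
      using sector_norm_bounds[OF _ _ sector] assms(1,2) by (simp_all add: n_def)
    have "(norm (y - \<alpha> *\<^sub>R u) / n)\<^sup>2
        \<le> 1 - 2 * \<alpha> * m * L / (m + L) + \<alpha> * (\<alpha> - 2 / (m + L)) * (norm u / n)\<^sup>2"
      using gradient_step_norm_sq_le[OF _ _ sector, of \<alpha>] assms(1-3) \<open>0 < n\<close>
      by (simp add: n_def divide_simps)
    then have "norm (y - \<alpha> *\<^sub>R u) / n + \<alpha> * \<delta> * (norm u / n) \<le> rho_GD m L \<alpha> \<delta>"
      using assms(1-5) step_size \<open>m * n \<le> norm u\<close> \<open>norm u \<le> L * n\<close> \<open>0 < n\<close>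
      by (intro perturbed_gain_le_rho_GD) (simp_all add: divide_simps)
    then show ?thesis
      using \<open>0 < n\<close> by (simp add: n_def divide_simps)
  qed
  finally show ?thesis .
qed

lemma geometric_bound_of_step_bound:
  fixes a :: "nat \<Rightarrow> real"
  assumes "0 \<le> \<rho>" "\<And>k. a (Suc k) \<le> \<rho> * a k"
  shows "a k \<le> \<rho> ^ k * a 0"
proof (induction k)
  case (Suc k)
  have "a (Suc k) \<le> \<rho> * a k"
    by (rule assms(2))
  also have "\<dots> \<le> \<rho> * (\<rho> ^ k * a 0)"
    using Suc.IH assms(1) by (rule mult_left_mono)
  finally show ?case
    by (simp add: mult.assoc)
qed simp

theorem proposition1p1:
  fixes m L \<alpha> \<delta> \<rho> :: real
  assumes "0 < m" "m < L" "\<alpha> > 0"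
    and "0 \<le> \<delta>" "\<delta> < 2 / (L / m + 1)"
    and "\<rho> \<ge> rho_GD m L \<alpha> \<delta>"
    and "\<alpha> \<le> (1 / (1 - \<delta>)) * (2 / (L + m) - \<delta> / m)
         \<or> \<alpha> \<ge> (1 / (1 + \<delta>)) * (2 / (L + m) + \<delta> / L)"
  shows "\<exists>c>0. \<forall>(f :: 'a::euclidean_space \<Rightarrow> real) g xs (x :: nat \<Rightarrow> 'a) e.
           sector_class m L f g xs \<longrightarrow>
           (\<forall>k. x (Suc k) = x k - \<alpha> *\<^sub>R (g (x k) + e k)) \<longrightarrow>
           (\<forall>k. norm (e k) \<le> \<delta> * norm (g (x k))) \<longrightarrow>
           (\<forall>k. norm (x k - xs) \<le> c * \<rho> ^ k * norm (x 0 - xs))"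
proof (intro exI[of _ 1] conjI allI impI)
  have "\<delta> * (L + m) < 1 * (L + m)"
    using assms(1,2,5) by (simp add: field_simps)
  then have "\<delta> < 1"
    using assms(1,2) by (simp add: mult_less_cancel_right)
  then have "0 \<le> rho_GD m L \<alpha> \<delta>"
    using assms(1-4) by (simp add: rho_GD_eq_max_endpoint_gains le_max_iff_disj)
  then have "0 \<le> \<rho>"
    using assms(6) by linarith
  fix f :: "'a \<Rightarrow> real" and g xs x e k
  assume "sector_class m L f g xs"
    and iteration: "\<forall>k. x (Suc k) = x k - \<alpha> *\<^sub>R (g (x k) + e k)"
    and error: "\<forall>k. norm (e k) \<le> \<delta> * norm (g (x k))"
  have "norm (x (Suc j) - xs) \<le> \<rho> * norm (x j - xs)" for j
  proof -
    have "x (Suc j) - xs = (x j - xs) - \<alpha> *\<^sub>R (g (x j) + e j)"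
      using iteration by simp
    also have "norm \<dots> \<le> rho_GD m L \<alpha> \<delta> * norm (x j - xs)"
      using assms(1-4,7) \<open>\<delta> < 1\<close> \<open>sector_class m L f g xs\<close> error
      by (intro perturbed_gradient_step_contracts) (simp_all add: sector_class_def)
    also have "\<dots> \<le> \<rho> * norm (x j - xs)"
      using assms(6) by (rule mult_right_mono) simp
    finally show ?thesis .
  qed
  then show "norm (x k - xs) \<le> 1 * \<rho> ^ k * norm (x 0 - xs)"
    using geometric_bound_of_step_bound[OF \<open>0 \<le> \<rho>\<close>, of "\<lambda>k. norm (x k - xs)"] by simp
qed simp

end
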